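(* Let $\beta\in B_3$ be conjugate to $\sigma_2^{-a_k}\sigma_1\cdots\sigma_2^{-a_1}\sigma_1\Delta^{2d}$, where $k\ge1$, $d\in\mathbb{Z}$, all $a_i\geq0$ and at least one $a_i\neq0$. Then both eigenvalues of $\rho(\beta)$ lie in $\mathbb{E}$. Furthermore, the eigenvalues of $\rho(\beta)$ (1) are both positive in $(\mathbb{E},Q)$ if $k$ and $a_1+\cdots+a_k$ are both even; (2) are both negative if $k$ and $a_1-\cdots-a_k$ are both odd; and (3) have opposite signs if $k-a_1-\cdots-a_k$ is odd.
   Context: $B_3$ is the braid group generated by $\sigma_1,\sigma_2$, and $\Delta=(\sigma_1\sigma_2\sigma_1)^2$. The reduced Burau representation $\rho:B_3\to\mathrm{GL}_2(\mathbb{Z}[t^{\pm1}])$ is the homomorphism with $\rho(\sigma_1)=\begin{pmatrix}-t&0\\1&1\end{pmatrix}$, $\rho(\sigma_2)=\begin{pmatrix}1&t\\0&-t\end{pmatrix}$. $\mathbb{E}=\bigcup_{n\ge1}\mathbb{R}((t^{1/n}))$ is the field of Puiseux series over $\mathbb{R}$, containing $\mathbb{Z}[t^{\pm1}]$, with the ordering whose positive cone $Q$ consists of the nonzero series whose lowest-exponent nonzero coefficient is positive. *)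

theory Defs
  imports "HOL-Computational_Algebra.Formal_Laurent_Series" "Jordan_Normal_Form.Char_Poly"
begin

text \<open>Letters: sigma_1, sigma_2 and their inverses. A braid in B_3 is represented by a word;
  two words represent the same braid iff they are related by braid_eq.\<close>

datatype letter = S1 | S2 | S1inv | S2inv

fun inv_letter :: "letter \<Rightarrow> letter" where
  "inv_letter S1 = S1inv" | "inv_letter S2 = S2inv"
| "inv_letter S1inv = S1" | "inv_letter S2inv = S2"

definition inv_word :: "letter list \<Rightarrow> letter list" where
  "inv_word w = rev (map inv_letter w)"

inductive relator :: "letter list \<Rightarrow> letter list \<Rightarrow> bool" where
  "relator [S1, S1inv] []" | "relator [S1inv, S1] []"
| "relator [S2, S2inv] []" | "relator [S2inv, S2] []"
| "relator [S1, S2, S1] [S2, S1, S2]"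

inductive braid_eq :: "letter list \<Rightarrow> letter list \<Rightarrow> bool" where
  rel: "relator l r \<Longrightarrow> braid_eq (u @ l @ v) (u @ r @ v)"
| refl: "braid_eq w w"
| sym: "braid_eq w w' \<Longrightarrow> braid_eq w' w"
| trans: "braid_eq w w' \<Longrightarrow> braid_eq w' w'' \<Longrightarrow> braid_eq w w''"

definition word_pow :: "letter list \<Rightarrow> int \<Rightarrow> letter list" where
  "word_pow w d = (if d \<ge> 0 then concat (replicate (nat d) w)
                   else concat (replicate (nat (- d)) (inv_word w)))"

definition Delta_word :: "letter list" where
  "Delta_word = [S1, S2, S1, S1, S2, S1]"

definition normal_word :: "nat \<Rightarrow> (nat \<Rightarrow> nat) \<Rightarrow> int \<Rightarrow> letter list" where
  "normal_word k a d =
     concat (map (\<lambda>i. replicate (a i) S2inv @ [S1]) (rev [1..<k+1])) @ word_pow Delta_word (2 * d)"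

text \<open>Matrices are over a commutative ring containing an element t together with its
  inverse tinv (t * tinv = 1); for Z[t^{+-1}] inside the Puiseux field these are t and t^{-1}.\<close>
fun burau_letter :: "'a::comm_ring_1 \<Rightarrow> 'a \<Rightarrow> letter \<Rightarrow> 'a mat" where
  "burau_letter t ti S1 = mat_of_rows_list 2 [[- t, 0], [1, 1]]"
| "burau_letter t ti S2 = mat_of_rows_list 2 [[1, t], [0, - t]]"
| "burau_letter t ti S1inv = mat_of_rows_list 2 [[- ti, 0], [ti, 1]]"
| "burau_letter t ti S2inv = mat_of_rows_list 2 [[1, 1], [0, - ti]]"

definition burau :: "'a::comm_ring_1 \<Rightarrow> 'a \<Rightarrow> letter list \<Rightarrow> 'a mat" where
  "burau t ti w = foldr (\<lambda>l M. burau_letter t ti l * M) w (1\<^sub>m 2)"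

text \<open>The Puiseux field E is the union over n \<ge> 1 of R((t^(1/n))). We identify R((t^(1/n)))
  with the Laurent series field (real fls) in the variable s = t^(1/n); the inclusion
  Z[t^{+-1}] \<subseteq> R((t^(1/n))) sends t to s^n.\<close>

definition rho_E :: "nat \<Rightarrow> letter list \<Rightarrow> real fls mat" where
  "rho_E n w = burau (fls_X ^ n) (fls_X_inv ^ n) w"

text \<open>Positive cone Q: nonzero series whose lowest-exponent nonzero coefficient is positive.
  (Independent of the chosen n, since reindexing s = u^m preserves lowest coefficients.)\<close>
definition Q_pos :: "real fls \<Rightarrow> bool" where
  "Q_pos f \<longleftrightarrow> f \<noteq> 0 \<and> fls_nth f (fls_subdegree f) > 0"

definition Q_neg :: "real fls \<Rightarrow> bool" where
  "Q_neg f \<longleftrightarrow> Q_pos (- f)"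

end

(*
  It suffices to work in the Laurent series field R((t)), the case n = 1 of the Puiseux field.
  With u = -t^-1 and the idempotent E = [[0,0],[1,1]], the Burau matrix of sigma_2^-a sigma_1 is
  u^a E + O(t^(1-a)); multiplying k such blocks gives P = u^S E + O(t^(1-S)) with
  S = a_1 + ... + a_k. So tr P = u^S + O(t^(1-S)), while det P = (-t)^k u^S has valuation
  k - S > -2S. The discriminant (tr P)^2 - 4 det P is therefore u^(2S) (1 + O(t)), a square in
  R((t)), and the eigenvalues of P lie in R((t)): one has leading term u^S, and by the
  determinant the other has leading coefficient (-1)^k. The factor Delta^(2d) acts as the scalar
  t^(6d), and conjugation does not change the characteristic polynomial, so the eigenvalues of
  rho(beta) have leading coefficients (-1)^S and (-1)^k, which gives the three sign cases.
*)

theory Submission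
  imports Defs
begin

definition fls_vanishes_below :: "int \<Rightarrow> 'a::zero fls \<Rightarrow> bool" where
  "fls_vanishes_below n f \<longleftrightarrow> (\<forall>i<n. fls_nth f i = 0)"

lemma fls_vanishes_below_iff: "fls_vanishes_below n f \<longleftrightarrow> f = 0 \<or> n \<le> fls_subdegree f"
  unfolding fls_vanishes_below_def by (auto intro: fls_subdegree_geI)

lemma fls_vanishes_below_zero [simp]: "fls_vanishes_below n 0"
  by (simp add: fls_vanishes_below_def)

lemma fls_vanishes_below_mono: "fls_vanishes_below n f \<Longrightarrow> m \<le> n \<Longrightarrow> fls_vanishes_below m f"
  by (simp add: fls_vanishes_below_def)

lemma fls_vanishes_below_add:
  "fls_vanishes_below n f \<Longrightarrow> fls_vanishes_below n g \<Longrightarrow> fls_vanishes_below n (f + g)"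
  by (simp add: fls_vanishes_below_def)

lemma fls_vanishes_below_diff:
  fixes f g :: "'a::group_add fls"
  shows "fls_vanishes_below n f \<Longrightarrow> fls_vanishes_below n g \<Longrightarrow> fls_vanishes_below n (f - g)"
  by (simp add: fls_vanishes_below_def)

lemma fls_vanishes_below_mult:
  fixes f g :: "'a::{semiring_1,semiring_no_zero_divisors} fls"
  shows "fls_vanishes_below m f \<Longrightarrow> fls_vanishes_below n g \<Longrightarrow> fls_vanishes_below (m + n) (f * g)"
  unfolding fls_vanishes_below_iff by (cases "f = 0"; cases "g = 0") auto

lemma fls_vanishes_below_subdegree [simp]: "fls_vanishes_below (fls_subdegree f) f"
  by (simp add: fls_vanishes_below_def)

lemma fls_vanishes_below_sum:
  "(\<And>i. i \<in> A \<Longrightarrow> fls_vanishes_below n (f i)) \<Longrightarrow> fls_vanishes_below n (\<Sum>i\<in>A. f i)"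
  by (induction A rule: infinite_finite_induct) (auto intro: fls_vanishes_below_add)

definition fls_lead_coeff :: "'a::zero fls \<Rightarrow> 'a" where
  "fls_lead_coeff f = fls_nth f (fls_subdegree f)"

lemma fls_lead_coeff_mult:
  fixes f g :: "'a::{semiring_1,semiring_no_zero_divisors} fls"
  shows "f \<noteq> 0 \<Longrightarrow> g \<noteq> 0 \<Longrightarrow> fls_lead_coeff (f * g) = fls_lead_coeff f * fls_lead_coeff g"
  by (simp add: fls_lead_coeff_def)

lemma fls_lead_coeff_power:
  fixes f :: "'a::idom fls"
  shows "fls_lead_coeff (f ^ n) = fls_lead_coeff f ^ n"
proof (cases "f = 0")
  case True
  then show ?thesis by (cases n) (simp_all add: fls_lead_coeff_def)
next
  case False
  show ?thesis
  proof (induction n)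
    case (Suc n)
    have "f ^ n \<noteq> 0"
      using False by simp
    with False Suc show ?case
      by (simp add: fls_lead_coeff_mult)
  qed (simp add: fls_lead_coeff_def)
qed

lemma fls_lead_coeff_X_intpow [simp]: "fls_lead_coeff (fls_X_intpow i :: 'a::zero_neq_one fls) = 1"
  by (simp add: fls_lead_coeff_def)

lemma fls_X_times_X_inv: "fls_X * fls_X_inv = (1 :: 'a::ring_1 fls)"
  by (simp add: fls_X_times_conv_shift)

lemma fls_same_leading_term:
  fixes f g :: "'a::ab_group_add fls"
  assumes "fls_vanishes_below (fls_subdegree g + 1) (f - g)" "g \<noteq> 0"
  shows "f \<noteq> 0" "fls_subdegree f = fls_subdegree g" "fls_lead_coeff f = fls_lead_coeff g"
proof -
  let ?m = "fls_subdegree g"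
  have agree: "fls_nth f i = fls_nth g i" if "i \<le> ?m" for i
    using assms(1) that unfolding fls_vanishes_below_def by simp
  have lead: "fls_nth g ?m \<noteq> 0"
    using assms(2) by simp
  show sub: "fls_subdegree f = ?m"
    using agree lead by (intro fls_subdegree_eqI) auto
  show "f \<noteq> 0" "fls_lead_coeff f = fls_lead_coeff g"
    using agree lead by (auto simp: fls_lead_coeff_def sub)
qed

lemma fls_sqrt_near_square:
  fixes F g :: "'a::field_char_0 fls"
  assumes "g \<noteq> 0" "fls_vanishes_below (2 * fls_subdegree g + 1) (F - g\<^sup>2)"
  shows "\<exists>s. s\<^sup>2 = F \<and> fls_vanishes_below (fls_subdegree g + 1) (s - g)"
proof -
  let ?m = "fls_subdegree g"
  define H where "H = F * inverse (g\<^sup>2)"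
  have g2: "g\<^sup>2 * inverse (g\<^sup>2) = 1"
    using assms(1) by simp
  have "fls_vanishes_below (2 * ?m + 1 + - (2 * ?m)) ((F - g\<^sup>2) * inverse (g\<^sup>2))"
    using assms by (intro fls_vanishes_below_mult)
      (simp_all add: fls_vanishes_below_iff fls_inverse_subdegree fls_subdegree_pow)
  moreover have "(F - g\<^sup>2) * inverse (g\<^sup>2) = H - 1"
    unfolding H_def by (simp add: algebra_simps g2)
  ultimately have H1: "fls_vanishes_below 1 (H - 1)"
    by simp
  define h where "h = fls_regpart H"
  have Hh: "H = fps_to_fls h"
    using H1 unfolding h_def fls_vanishes_below_def
    by (intro fls_regpart_to_fls_trivial[symmetric] fls_subdegree_ge0I) auto
  have h0: "fps_nth h 0 = 1"
    using H1 unfolding h_def fls_vanishes_below_def by (auto dest: spec[of _ 0])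
  define r where "r = fps_radical (\<lambda>_ _. 1) 2 h"
  have "r ^ 2 = h"
    unfolding r_def using power_radical[of h "\<lambda>_ _. 1" 1] h0 by (simp add: numeral_2_eq_2)
  then have R2: "(fps_to_fls r)\<^sup>2 = H"
    by (simp add: Hh flip: fps_to_fls_power)
  have R1: "fls_vanishes_below 1 (fps_to_fls r - 1)"
    unfolding fls_vanishes_below_def r_def by (auto simp: h0)
  define s where "s = g * fps_to_fls r"
  have "s\<^sup>2 = g\<^sup>2 * inverse (g\<^sup>2) * F"
    unfolding s_def power_mult_distrib R2 H_def by (simp only: mult_ac)
  then have "s\<^sup>2 = F"
    by (simp add: g2)
  moreover have "fls_vanishes_below (?m + 1) (s - g)"
    using fls_vanishes_below_mult[OF fls_vanishes_below_subdegree R1] unfolding s_def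
    by (simp add: algebra_simps)
  ultimately show ?thesis
    by blast
qed

lemma fls_quadratic_dominant_root:
  fixes T P g :: "'a::field_char_0 fls"
  assumes "g \<noteq> 0"
    and trace: "fls_vanishes_below (fls_subdegree g + 1) (T - g)"
    and det: "fls_vanishes_below (2 * fls_subdegree g + 1) P"
  shows "\<exists>x y. x + y = T \<and> x * y = P \<and> fls_vanishes_below (fls_subdegree g + 1) (x - g)"
proof -
  let ?m = "fls_subdegree g"
  have "fls_vanishes_below (?m + 1 + ?m) ((T - g) * (T - g + 2 * g))"
    using assms(1) trace by (intro fls_vanishes_below_mult fls_vanishes_below_add)
      (auto simp: fls_vanishes_below_iff fls_subdegree_mult)
  moreover have "fls_vanishes_below (2 * ?m + 1) (4 * P)"
    using det fls_vanishes_below_mult[of 0 4 _ P] by (simp add: fls_vanishes_below_iff)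
  ultimately have "fls_vanishes_below (2 * ?m + 1) ((T - g) * (T - g + 2 * g) - 4 * P)"
    by (intro fls_vanishes_below_diff) (simp_all add: algebra_simps)
  moreover have "(T - g) * (T - g + 2 * g) - 4 * P = (T\<^sup>2 - 4 * P) - g\<^sup>2"
    by (simp add: algebra_simps power2_eq_square)
  ultimately have "fls_vanishes_below (2 * ?m + 1) ((T\<^sup>2 - 4 * P) - g\<^sup>2)"
    by metis
  then obtain s where s: "s\<^sup>2 = T\<^sup>2 - 4 * P" "fls_vanishes_below (?m + 1) (s - g)"
    using fls_sqrt_near_square[OF assms(1)] by blast
  define x where "x = (T + s) / 2"
  define y where "y = (T - s) / 2"
  have sum: "x + y = T"
    unfolding x_def y_def by (simp add: field_simps)
  have "x * y = (T\<^sup>2 - s\<^sup>2) / 4"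
    unfolding x_def y_def by (simp add: field_simps power2_eq_square)
  then have prod: "x * y = P"
    by (simp add: s(1))
  have half: "fls_vanishes_below 0 (inverse (2 :: 'a fls))"
    unfolding fls_vanishes_below_iff fls_inverse_subdegree by simp
  have "x - g = inverse 2 * ((T - g) + (s - g))"
    unfolding x_def by (simp add: field_simps)
  moreover have "fls_vanishes_below (0 + (?m + 1)) (inverse 2 * ((T - g) + (s - g)))"
    using half trace s(2) by (intro fls_vanishes_below_mult fls_vanishes_below_add)
  ultimately have "fls_vanishes_below (?m + 1) (x - g)"
    by (simp only: add_0_left)
  with sum prod show ?thesis
    by blast
qed

definition mat2 :: "'a \<Rightarrow> 'a \<Rightarrow> 'a \<Rightarrow> 'a \<Rightarrow> 'a::zero mat" where
  "mat2 a b c d = mat_of_rows_list 2 [[a, b], [c, d]]"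

lemma dim_mat2 [simp]: "dim_row (mat2 a b c d) = 2" "dim_col (mat2 a b c d) = 2"
  unfolding mat2_def mat_of_rows_list_def by simp_all

lemma mat2_carrier [simp]: "mat2 a b c d \<in> carrier_mat 2 2"
  by (rule carrier_matI) simp_all

lemma index_mat2 [simp]:
  "mat2 a b c d $$ (0, 0) = a" "mat2 a b c d $$ (0, Suc 0) = b"
  "mat2 a b c d $$ (Suc 0, 0) = c" "mat2 a b c d $$ (Suc 0, Suc 0) = d"
  unfolding mat2_def mat_of_rows_list_def by simp_all

lemma mat2_eta:
  assumes "A \<in> carrier_mat 2 2"
  shows "A = mat2 (A $$ (0, 0)) (A $$ (0, 1)) (A $$ (1, 0)) (A $$ (1, 1))"
  using assms by (intro eq_matI) (auto simp: less_2_cases_iff)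

lemma mat2_eq_iff: "mat2 a b c d = mat2 a' b' c' d' \<longleftrightarrow> a = a' \<and> b = b' \<and> c = c' \<and> d = d'"
  by (metis index_mat2)

lemma one_mat2: "1\<^sub>m 2 = mat2 1 0 0 1"
  by (intro eq_matI) (auto simp: less_2_cases_iff)

lemma sum_lessThan_2: "(\<Sum>i<2. f i) = f 0 + f (Suc 0)"
  by (simp add: numeral_2_eq_2)

lemma mult_mat2:
  "mat2 a b c d * mat2 a' b' c' d' = mat2 (a * a' + b * c') (a * b' + b * d') (c * a' + d * c') (c * b' + d * d')"
  by (intro eq_matI) (auto simp: less_2_cases_iff scalar_prod_def atLeast0LessThan sum_lessThan_2)

lemma det_mat2: "det (mat2 a b c d) = a * d - b * (c :: 'a::comm_ring_1)"
proof -
  let ?M = "mat2 a b c d"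
  have minors: "mat_delete ?M 0 0 = mat 1 1 (\<lambda>_. d)" "mat_delete ?M (Suc 0) 0 = mat 1 1 (\<lambda>_. b)"
    by (auto intro!: eq_matI simp: mat_delete_def)
  have "det ?M = (\<Sum>i<2. ?M $$ (i, 0) * cofactor ?M i 0)"
    by (rule laplace_expansion_column) auto
  also have "\<dots> = a * d - b * c"
    by (simp add: sum_lessThan_2 cofactor_def minors det_single)
  finally show ?thesis .
qed

lemma char_poly_mat2: "char_poly (mat2 a b c d) = [:a * d - b * c, - (a + d), 1:]"
proof -
  have "char_poly (mat2 a b c d) = det (mat2 ([:0, 1:] + [:- a:]) [:- b:] [:- c:] ([:0, 1:] + [:- d:]))"
    unfolding char_poly_def
    by (rule arg_cong[where f = det], rule eq_matI) (auto simp: char_poly_matrix_def less_2_cases_iff)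
  then show ?thesis
    by (simp add: det_mat2 algebra_simps)
qed

lemma char_poly_mat2_eq_linear_factors:
  assumes "x + y = a + d" "x * y = a * d - b * c"
  shows "char_poly (mat2 a b c d) = [:- x, 1:] * [:- y, 1:]"
  by (simp add: char_poly_mat2 flip: assms)

lemma char_poly_mult_scalar_mat2:
  assumes "A \<in> carrier_mat 2 2" "x + y = A $$ (0, 0) + A $$ (1, 1)" "x * y = det A"
  shows "char_poly (A * mat2 z 0 0 z) = [:- (z * x), 1:] * [:- (z * y), 1:]"
proof -
  obtain p q r s where A: "A = mat2 p q r s"
    using mat2_eta[OF assms(1)] by blast
  have "z * x + z * y = z * p + z * s"
    using assms(2) unfolding A by (simp flip: distrib_left)
  moreover have "z * x * (z * y) = z * z * (x * y)"
    by (simp only: ac_simps)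
  moreover have "x * y = p * s - q * r"
    using assms(3) unfolding A by (simp add: det_mat2)
  ultimately show ?thesis
    unfolding A mult_mat2 by (intro char_poly_mat2_eq_linear_factors) (simp_all add: algebra_simps)
qed

lemma burau_letter_mat2 [simp]:
  "burau_letter t ti S1 = mat2 (- t) 0 1 1"
  "burau_letter t ti S2 = mat2 1 t 0 (- t)"
  "burau_letter t ti S1inv = mat2 (- ti) 0 ti 1"
  "burau_letter t ti S2inv = mat2 1 1 0 (- ti)"
  by (simp_all add: mat2_def)

declare burau_letter.simps [simp del]

lemma burau_letter_carrier [simp]: "burau_letter t ti l \<in> carrier_mat 2 2"
  by (cases l) simp_all

lemma burau_Nil [simp]: "burau t ti [] = 1\<^sub>m 2"
  by (simp add: burau_def)

lemma burau_Cons [simp]: "burau t ti (l # w) = burau_letter t ti l * burau t ti w"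
  by (simp add: burau_def)

lemma burau_carrier [simp]: "burau t ti w \<in> carrier_mat 2 2"
  by (induction w) (auto intro!: mult_carrier_mat[of _ 2 2 _ 2])

lemma dim_burau [simp]: "dim_row (burau t ti w) = 2" "dim_col (burau t ti w) = 2"
  using burau_carrier by blast+

lemma burau_append: "burau t ti (u @ v) = burau t ti u * burau t ti v"
  by (induction u) (simp_all add: assoc_mult_mat[of _ 2 2 _ 2 _ 2] left_mult_one_mat[of _ 2 2])

lemma burau_relator:
  assumes "t * ti = 1" "relator l r"
  shows "burau t ti l = burau t ti r"
  using assms(2)
  by cases (simp_all add: mult_mat2 one_mat2 mat2_eq_iff assms(1) mult.commute[of ti t] algebra_simps)

lemma burau_braid_eq:
  assumes "t * ti = 1" "braid_eq w w'"
  shows "burau t ti w = burau t ti w'"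
  using assms(2) by induction (simp_all add: burau_append burau_relator[OF assms(1)])

lemma burau_inv_letter:
  assumes "t * ti = 1"
  shows "burau_letter t ti (inv_letter l) * burau_letter t ti l = 1\<^sub>m 2"
    and "burau_letter t ti l * burau_letter t ti (inv_letter l) = 1\<^sub>m 2"
  using assms by (cases l; simp add: mult_mat2 one_mat2 mat2_eq_iff mult.commute[of ti t])+

lemma burau_inv_word:
  assumes "t * ti = 1"
  shows "burau t ti (inv_word w) * burau t ti w = 1\<^sub>m 2"
    and "burau t ti w * burau t ti (inv_word w) = 1\<^sub>m 2"
proof (induction w)
  case (Cons l w)
  let ?W = "burau t ti w" and ?V = "burau t ti (inv_word w)"
  let ?L = "burau_letter t ti l" and ?K = "burau_letter t ti (inv_letter l)"
  have word: "burau t ti (inv_word (l # w)) = ?V * ?K"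
    by (simp add: inv_word_def burau_append right_mult_one_mat[of _ 2 2])
  have "?V * ?K * (?L * ?W) = ?V * (?K * ?L) * ?W"
    by (simp add: assoc_mult_mat[of _ 2 2 _ 2 _ 2] mult_carrier_mat[of _ 2 2 _ 2])
  also have "\<dots> = 1\<^sub>m 2"
    using Cons.IH(1) burau_inv_letter(1)[OF assms] by (simp add: right_mult_one_mat[of _ 2 2])
  finally show "burau t ti (inv_word (l # w)) * burau t ti (l # w) = 1\<^sub>m 2"
    by (simp add: word)
  have "?L * ?W * (?V * ?K) = ?L * (?W * ?V) * ?K"
    by (simp add: assoc_mult_mat[of _ 2 2 _ 2 _ 2] mult_carrier_mat[of _ 2 2 _ 2])
  also have "\<dots> = 1\<^sub>m 2"
    using Cons.IH(2) burau_inv_letter(2)[OF assms] by (simp add: right_mult_one_mat[of _ 2 2])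
  finally show "burau t ti (l # w) * burau t ti (inv_word (l # w)) = 1\<^sub>m 2"
    by (simp add: word)
qed (simp_all add: inv_word_def)

lemma char_poly_burau_conjugate:
  assumes "t * ti = 1" "braid_eq v (g @ w @ inv_word g)"
  shows "char_poly (burau t ti v) = char_poly (burau t ti w)"
proof -
  have "similar_mat (burau t ti (g @ w @ inv_word g)) (burau t ti w)"
    unfolding similar_mat_def similar_mat_wit_def Let_def
    by (rule exI[of _ "burau t ti g"], rule exI[of _ "burau t ti (inv_word g)"])
      (simp add: burau_inv_word[OF assms(1)] burau_append assoc_mult_mat[of _ 2 2 _ 2 _ 2]
        mult_carrier_mat[of _ 2 2 _ 2])
  then show ?thesis
    using burau_braid_eq[OF assms] by (simp add: char_poly_similar)
qed

(* M = c E + O(t^n) with E = [[0,0],[1,1]]; note E * E = E. *)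
definition approx_E :: "int \<Rightarrow> 'a::ab_group_add fls \<Rightarrow> 'a fls mat \<Rightarrow> bool" where
  "approx_E n c M \<longleftrightarrow> (\<exists>p q r s. M = mat2 p q r s \<and> fls_vanishes_below n p \<and>
     fls_vanishes_below n q \<and> fls_vanishes_below n (r - c) \<and> fls_vanishes_below n (s - c))"

lemma approx_E_mat2:
  "approx_E n c (mat2 p q r s) \<longleftrightarrow> fls_vanishes_below n p \<and> fls_vanishes_below n q \<and>
     fls_vanishes_below n (r - c) \<and> fls_vanishes_below n (s - c)"
  unfolding approx_E_def mat2_eq_iff by blast

lemma approx_E_mult:
  fixes c d :: "'a::idom fls"
  assumes A: "approx_E m c A" and B: "approx_E n d B"
    and c: "fls_vanishes_below (m - 1) c" and d: "fls_vanishes_below (n - 1) d"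
  shows "approx_E (m + n - 1) (c * d) (A * B)"
proof -
  obtain p q r s where A: "A = mat2 p q r s" and p: "fls_vanishes_below m p"
    and q: "fls_vanishes_below m q" and rc: "fls_vanishes_below m (r - c)"
    and sc: "fls_vanishes_below m (s - c)"
    using A unfolding approx_E_def by blast
  obtain p' q' r' s' where B: "B = mat2 p' q' r' s'" and p': "fls_vanishes_below n p'"
    and q': "fls_vanishes_below n q'" and rd: "fls_vanishes_below n (r' - d)"
    and sd: "fls_vanishes_below n (s' - d)"
    using B unfolding approx_E_def by blast
  have below: "fls_vanishes_below (m - 1) x" if "fls_vanishes_below m (x - c)" for x
    using fls_vanishes_below_add[OF fls_vanishes_below_mono[OF that] c] by simp
  have below': "fls_vanishes_below (n - 1) x" if "fls_vanishes_below n (x - d)" for x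
    using fls_vanishes_below_add[OF fls_vanishes_below_mono[OF that] d] by simp
  have prod: "fls_vanishes_below (m + n - 1) (x * y)"
    if "fls_vanishes_below i x" "fls_vanishes_below j y" "m + n - 1 \<le> i + j"
    for x y :: "'a fls" and i j
    using fls_vanishes_below_mono[OF fls_vanishes_below_mult[OF that(1,2)] that(3)] .
  have e1: "r * p' + s * r' - c * d = r * p' + s * (r' - d) + (s - c) * d"
    and e2: "r * q' + s * s' - c * d = r * q' + s * (s' - d) + (s - c) * d"
    by (simp_all add: algebra_simps)
  have "fls_vanishes_below (m + n - 1) (p * p' + q * r')"
    by (intro fls_vanishes_below_add prod[OF p p'] prod[OF q below'[OF rd]]) simp_all
  moreover have "fls_vanishes_below (m + n - 1) (p * q' + q * s')"
    by (intro fls_vanishes_below_add prod[OF p q'] prod[OF q below'[OF sd]]) simp_all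
  moreover have "fls_vanishes_below (m + n - 1) (r * p' + s * (r' - d) + (s - c) * d)"
    by (intro fls_vanishes_below_add prod[OF below[OF rc] p'] prod[OF below[OF sc] rd]
        prod[OF sc d]) simp_all
  moreover have "fls_vanishes_below (m + n - 1) (r * q' + s * (s' - d) + (s - c) * d)"
    by (intro fls_vanishes_below_add prod[OF below[OF rc] q'] prod[OF below[OF sc] sd]
        prod[OF sc d]) simp_all
  ultimately show ?thesis
    unfolding A B mult_mat2 approx_E_mat2 e1 e2 by blast
qed

lemma approx_E_trace:
  "approx_E n c M \<Longrightarrow> fls_vanishes_below n (M $$ (0, 0) + M $$ (1, 1) - c)"
  unfolding approx_E_def
  by (auto dest: fls_vanishes_below_add[of n _ "_ - c"] simp: algebra_simps)

definition block_word :: "nat \<Rightarrow> letter list" where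
  "block_word a = replicate a S2inv @ [S1]"

lemma burau_S2inv_power:
  "burau t ti (replicate a S2inv) = mat2 1 (\<Sum>j<a. (- ti) ^ j) 0 ((- ti) ^ a)"
  by (induction a) (simp_all add: one_mat2 mult_mat2 algebra_simps)

lemma burau_block_word:
  "burau t ti (block_word a) =
     mat2 ((\<Sum>j<a. (- ti) ^ j) - t) (\<Sum>j<a. (- ti) ^ j) ((- ti) ^ a) ((- ti) ^ a)"
  by (simp add: block_word_def burau_append burau_S2inv_power one_mat2 mult_mat2)

lemma det_burau_blocks:
  "det (burau t ti (concat (map block_word as))) = (- t) ^ length as * (- ti) ^ sum_list as"
proof (induction as)
  case (Cons a as)
  have "det (burau t ti (concat (map block_word (a # as))))
      = det (burau t ti (block_word a)) * det (burau t ti (concat (map block_word as)))"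
    by (simp add: burau_append det_mult[of _ 2])
  then show ?case
    by (simp add: Cons.IH burau_block_word det_mat2 power_add algebra_simps)
qed (simp add: one_mat2 det_mat2)

lemma approx_E_block_word:
  "approx_E (1 - int a) ((- fls_X_inv) ^ a)
     (burau (fls_X :: 'a::idom fls) fls_X_inv (block_word a))"
proof -
  have "fls_vanishes_below (1 - int a) ((- fls_X_inv :: 'a fls) ^ j)" if "j < a" for j
    using that by (simp add: fls_vanishes_below_iff fls_subdegree_pow)
  then have "fls_vanishes_below (1 - int a) (\<Sum>j<a. (- fls_X_inv :: 'a fls) ^ j)"
    by (intro fls_vanishes_below_sum) simp
  moreover have "fls_vanishes_below (1 - int a) (fls_X :: 'a fls)"
    by (simp add: fls_vanishes_below_iff)
  ultimately show ?thesis
    unfolding approx_E_mat2 burau_block_word by (simp add: fls_vanishes_below_diff)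
qed

lemma approx_E_blocks:
  assumes "as \<noteq> []"
  shows "approx_E (1 - int (sum_list as)) ((- fls_X_inv) ^ sum_list as)
     (burau (fls_X :: 'a::idom fls) fls_X_inv (concat (map block_word as)))"
  using assms
proof (induction as rule: list_nonempty_induct)
  case (single a)
  then show ?case
    using approx_E_block_word[of a] by (simp add: right_mult_one_mat[of _ 2 2])
next
  case (cons a as)
  have power_below: "fls_vanishes_below (- int n) ((- fls_X_inv :: 'a fls) ^ n)" for n
    by (simp add: fls_vanishes_below_iff fls_subdegree_pow)
  have "approx_E (1 - int a + (1 - int (sum_list as)) - 1)
      ((- fls_X_inv) ^ a * (- fls_X_inv) ^ sum_list as)
      (burau fls_X fls_X_inv (block_word a) *
       burau (fls_X :: 'a fls) fls_X_inv (concat (map block_word as)))"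
    using approx_E_block_word cons.IH power_below by (intro approx_E_mult) simp_all
  then show ?case
    by (simp add: burau_append power_add algebra_simps)
qed

lemma burau_blocks_eigenvalues:
  fixes as :: "nat list"
  defines "P \<equiv> burau (fls_X :: 'a::field_char_0 fls) fls_X_inv (concat (map block_word as))"
  assumes "as \<noteq> []"
  shows "\<exists>x y. x + y = P $$ (0, 0) + P $$ (1, 1) \<and> x * y = det P \<and> x \<noteq> 0 \<and> y \<noteq> 0 \<and>
    fls_lead_coeff x = (- 1) ^ sum_list as \<and> fls_lead_coeff y = (- 1) ^ length as"
proof -
  define S where "S = sum_list as"
  define g :: "'a fls" where "g = (- fls_X_inv) ^ S"
  have g: "g \<noteq> 0" "fls_subdegree g = - int S"
    unfolding g_def by (simp_all add: fls_subdegree_pow)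
  have lead_g: "fls_lead_coeff g = (- 1) ^ S"
    unfolding g_def fls_lead_coeff_power by (simp add: fls_lead_coeff_def)
  have trace: "fls_vanishes_below (fls_subdegree g + 1) (P $$ (0, 0) + P $$ (1, 1) - g)"
    unfolding g(2) using approx_E_trace[OF approx_E_blocks[OF assms(2)]]
    by (simp add: P_def g_def S_def)
  have det: "det P = (- fls_X) ^ length as * g"
    by (simp add: P_def g_def S_def det_burau_blocks)
  have det_lead: "det P \<noteq> 0" "fls_subdegree (det P) = int (length as) - int S"
    "fls_lead_coeff (det P) = (- 1) ^ length as * (- 1) ^ S"
    using g lead_g by (simp_all add: det fls_subdegree_pow fls_lead_coeff_mult fls_lead_coeff_power)
      (simp add: fls_lead_coeff_def)
  have "fls_vanishes_below (2 * fls_subdegree g + 1) (det P)"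
    using det_lead(2) assms(2) by (cases as) (simp_all add: fls_vanishes_below_iff g(2))
  then obtain x y where xy: "x + y = P $$ (0, 0) + P $$ (1, 1)" "x * y = det P"
    and x: "fls_vanishes_below (fls_subdegree g + 1) (x - g)"
    using fls_quadratic_dominant_root[OF g(1) trace] by blast
  have x_lead: "x \<noteq> 0" "fls_lead_coeff x = (- 1) ^ S"
    using fls_same_leading_term[OF x g(1)] lead_g by simp_all
  have "y \<noteq> 0"
    using xy(2) det_lead(1) by auto
  then have "fls_lead_coeff x * fls_lead_coeff y = fls_lead_coeff (det P)"
    using x_lead(1) by (simp add: fls_lead_coeff_mult flip: xy(2))
  then have "fls_lead_coeff y = (- 1) ^ length as"
    using x_lead(2) det_lead(3) by simp
  with xy x_lead \<open>y \<noteq> 0\<close> show ?thesis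
    unfolding S_def by blast
qed

lemma burau_Delta: "burau t ti Delta_word = mat2 (t ^ 3) 0 0 (t ^ 3)"
  by (simp add: Delta_word_def one_mat2 mult_mat2 algebra_simps eval_nat_numeral)

lemma burau_inv_Delta: "burau t ti (inv_word Delta_word) = mat2 (ti ^ 3) 0 0 (ti ^ 3)"
  by (simp add: Delta_word_def inv_word_def one_mat2 mult_mat2 algebra_simps eval_nat_numeral)

lemma burau_concat_replicate_scalar:
  assumes "burau t ti w = mat2 z 0 0 z"
  shows "burau t ti (concat (replicate n w)) = mat2 (z ^ n) 0 0 (z ^ n)"
  by (induction n) (simp_all add: burau_append assms one_mat2 mult_mat2)

lemma burau_Delta_power:
  "burau fls_X fls_X_inv (word_pow Delta_word e) =
     mat2 (fls_X_intpow (3 * e)) 0 0 (fls_X_intpow (3 * e) :: 'a::comm_ring_1 fls)"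
proof (cases "e \<ge> 0")
  case True
  have "(fls_X ^ 3) ^ nat e = (fls_X_intpow (3 * e) :: 'a fls)"
    using True by (simp add: fls_X_power_conv_shift_1 fls_X_intpow_power mult.commute)
  then show ?thesis
    using True by (simp add: word_pow_def burau_concat_replicate_scalar[OF burau_Delta])
next
  case False
  have "(fls_X_inv ^ 3) ^ nat (- e) = (fls_X_inv ^ (3 * nat (- e)) :: 'a fls)"
    by (rule power_mult[symmetric])
  also have "\<dots> = fls_shift (int (3 * nat (- e))) 1"
    by (rule fls_X_inv_power_conv_shift_1)
  also have "int (3 * nat (- e)) = - (3 * e)"
    using False by simp
  finally have "(fls_X_inv ^ 3) ^ nat (- e) = (fls_X_intpow (3 * e) :: 'a fls)" .
  then show ?thesis
    using False by (simp add: word_pow_def burau_concat_replicate_scalar[OF burau_inv_Delta])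
qed

lemma burau_normal_word_eigenvalues:
  assumes "k \<ge> 1"
  shows "\<exists>x y :: 'a::field_char_0 fls.
    char_poly (burau fls_X fls_X_inv (normal_word k a d)) = [:- x, 1:] * [:- y, 1:] \<and>
    x \<noteq> 0 \<and> y \<noteq> 0 \<and> fls_lead_coeff x = (- 1) ^ (\<Sum>i=1..k. a i) \<and> fls_lead_coeff y = (- 1) ^ k"
proof -
  define as where "as = map a (rev [1..<k+1])"
  define P :: "'a fls mat" where "P = burau fls_X fls_X_inv (concat (map block_word as))"
  define z :: "'a fls" where "z = fls_X_intpow (6 * d)"
  have as: "as \<noteq> []" "sum_list as = (\<Sum>i=1..k. a i)" "length as = k"
    using assms by (auto simp: as_def sum_list_rev interv_sum_list_conv_sum_set_nat
        atLeastLessThanSuc_atLeastAtMost simp del: upt_Suc simp flip: rev_map)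
  obtain x y where xy: "x + y = P $$ (0, 0) + P $$ (1, 1)" "x * y = det P" "x \<noteq> 0" "y \<noteq> 0"
    "fls_lead_coeff x = (- 1) ^ sum_list as" "fls_lead_coeff y = (- 1) ^ length as"
    using burau_blocks_eigenvalues[OF as(1)] unfolding P_def by blast
  have "normal_word k a d = concat (map block_word as) @ word_pow Delta_word (2 * d)"
    by (simp add: normal_word_def as_def block_word_def comp_def)
  then have "burau fls_X fls_X_inv (normal_word k a d) = P * mat2 z 0 0 z"
    by (simp add: burau_append P_def z_def burau_Delta_power)
  also have "char_poly \<dots> = [:- (z * x), 1:] * [:- (z * y), 1:]"
    using xy(1,2) unfolding P_def by (intro char_poly_mult_scalar_mat2) simp_all
  finally show ?thesis
    using xy(3-6) as
    by (intro exI[of _ "z * x"] exI[of _ "z * y"]) (simp add: z_def fls_lead_coeff_mult)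
qed

lemma Q_pos_Q_neg_of_lead_coeff:
  assumes "f \<noteq> 0" "fls_lead_coeff f = (- 1) ^ n"
  shows "Q_pos f \<longleftrightarrow> even n" "Q_neg f \<longleftrightarrow> odd n"
proof -
  have "Q_pos f \<longleftrightarrow> fls_lead_coeff f > 0" "Q_neg f \<longleftrightarrow> fls_lead_coeff f < 0"
    using assms(1) by (auto simp: Q_pos_def Q_neg_def fls_lead_coeff_def)
  then show "Q_pos f \<longleftrightarrow> even n" "Q_neg f \<longleftrightarrow> odd n"
    using assms(2) by (cases "even n"; simp)+
qed

theorem mainTheorem13:
  fixes k :: nat and a :: "nat \<Rightarrow> nat" and d :: int and g beta :: "letter list"
  assumes "k \<ge> 1"
    and "\<exists>i\<in>{1..k}. a i \<noteq> 0"
    and "braid_eq beta (g @ normal_word k a d @ inv_word g)"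
  shows "\<exists>n>0. \<exists>x1 x2 :: real fls.
     char_poly (rho_E n beta) = [:- x1, 1:] * [:- x2, 1:]
     \<and> (even k \<and> even (\<Sum>i=1..k. a i) \<longrightarrow> Q_pos x1 \<and> Q_pos x2)
     \<and> (odd k \<and> odd (int (a 1) - (\<Sum>i=2..k. int (a i))) \<longrightarrow> Q_neg x1 \<and> Q_neg x2)
     \<and> (odd (int k - (\<Sum>i=1..k. int (a i))) \<longrightarrow>
          (Q_pos x1 \<and> Q_neg x2) \<or> (Q_neg x1 \<and> Q_pos x2))"
proof -
  let ?S = "\<Sum>i=1..k. a i"
  obtain x y :: "real fls"
    where cp: "char_poly (burau fls_X fls_X_inv (normal_word k a d)) = [:- x, 1:] * [:- y, 1:]"
      and x: "x \<noteq> 0" "fls_lead_coeff x = (- 1) ^ ?S"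
      and y: "y \<noteq> 0" "fls_lead_coeff y = (- 1) ^ k"
    using burau_normal_word_eigenvalues[OF assms(1)] by blast
  have "char_poly (rho_E 1 beta) = [:- x, 1:] * [:- y, 1:]"
    using char_poly_burau_conjugate[OF fls_X_times_X_inv[where 'a = real] assms(3)] cp
    by (simp add: rho_E_def)
  moreover have "odd (int (a 1) - (\<Sum>i=2..k. int (a i))) \<longleftrightarrow> odd ?S"
  proof -
    have "int ?S = int (a 1) + (\<Sum>i=2..k. int (a i))"
      using assms(1) by (simp add: sum.atLeast_Suc_atMost numeral_2_eq_2)
    then show ?thesis
      by presburger
  qed
  moreover have "odd (int k - (\<Sum>i=1..k. int (a i))) \<longleftrightarrow> odd (k + ?S)"
    by (simp flip: of_nat_sum)
  ultimately show ?thesis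
    using Q_pos_Q_neg_of_lead_coeff[OF x] Q_pos_Q_neg_of_lead_coeff[OF y]
    by (intro exI[of _ 1] exI[of _ x] exI[of _ y]) auto
qed

end
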